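(* Let $k\in\mathbb{N}$ be even and let $n,m$ be odd integers. Then $$2K_{k,1}\left(\tfrac{n}{2},\tfrac{m}{2}\right)=K_{k,2}(n,m)=H_{2k}(n,m)\qquad\text{and}\qquad K_{k,1}(n,m)=H_k(n,m).$$
   Context: For even $k\in\mathbb{N}$ put $k^*=4k$ if $\gcd(k,6)=2$ and $k^*=36k$ if $6\mid k$. For $a\in\{1,2\}$ and $n,m\in\frac12\mathbb{Z}$, $K_{k,a}(n,m)=\sum_{0\le h<ak,\ \gcd(h,ak)=1} e^{\frac{2\pi i}{ak}(-nh+mh')}$, where for each $h$, $h'$ is an integer with $hh'\equiv-1\pmod{k^*}$. For $K\in\mathbb{N}$ and integers $n,m$, the Kloosterman sum is $H_K(n,m)=\sum_{0\le h<K,\ \gcd(h,K)=1} e^{-\frac{2\pi i}{K}(nh-mw)}$, where for each $h$, $w$ is an integer with $hw\equiv-1\pmod K$. *)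

theory Defs
  imports Complex_Main "HOL-Number_Theory.Number_Theory"
begin

definition kstar :: "nat \<Rightarrow> int" where
  "kstar k = (if gcd k 6 = 2 then 4 * int k else 36 * int k)"

definition negInv :: "int \<Rightarrow> int \<Rightarrow> int" where
  "negInv M h = (SOME h'. [h * h' = -1] (mod M))"

text \<open>K_{k,a}(n,m) for n, m in (1/2)Z (represented as reals).\<close>
definition Kka :: "nat \<Rightarrow> nat \<Rightarrow> real \<Rightarrow> real \<Rightarrow> complex" where
  "Kka k a n m =
     (\<Sum>h\<in>{h. h < a * k \<and> coprime h (a * k)}.
        exp (2 * pi * \<i> / of_nat (a * k) *
             complex_of_real (- n * real h + m * real_of_int (negInv (kstar k) (int h)))))"

definition HK :: "nat \<Rightarrow> int \<Rightarrow> int \<Rightarrow> complex" where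
  "HK K n m =
     (\<Sum>h\<in>{h. h < K \<and> coprime h K}.
        exp (- (2 * pi * \<i> / of_nat K) *
             of_int (n * int h - m * negInv (int K) (int h))))"

end

theory Submission
  imports Defs
begin

text \<open>
  Each term is a root of unity of order \<open>a k\<close>, so its exponent only matters modulo \<open>a k\<close>.
  Since \<open>a k\<close> divides \<open>k*\<close>, an \<open>h'\<close> with \<open>h h' = -1 (mod k*)\<close> also satisfies it modulo
  \<open>a k\<close>, whence \<open>K_{k,a}(n,m) = H_{ak}(n,m)\<close>.  The reduced residues modulo \<open>2k\<close> are the
  \<open>h\<close> and \<open>h + k\<close> with \<open>h\<close> a reduced residue modulo \<open>k\<close>.  As \<open>k\<close> is even and \<open>h, h'\<close> are odd,
  \<open>(h + k)(h' + k) = h h' + k (h + h' + k) = h h' (mod 2k)\<close>, so \<open>h' + k\<close> serves for \<open>h + k\<close>;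
  the exponent then changes by \<open>k (m - n) = 0 (mod 2k)\<close> because \<open>n, m\<close> are odd.  Hence the
  terms of \<open>K_{k,2}(n,m)\<close> at \<open>h\<close> and \<open>h + k\<close> agree, and each equals the term of
  \<open>K_{k,1}(n/2,m/2)\<close> at \<open>h\<close>.
\<close>

definition unity_root :: "nat \<Rightarrow> int \<Rightarrow> complex" where
  "unity_root N x = exp (2 * pi * \<i> * of_int x / of_nat N)"

lemma unity_root_cong:
  assumes "[x = y] (mod int N)"
  shows "unity_root N x = unity_root N y"
proof (cases "N = 0")
  case True
  then show ?thesis using assms by (simp add: cong_def)
next
  case False
  from assms obtain t where t: "y = x + int N * t" by (auto simp: cong_iff_lin)
  have "unity_root N y = unity_root N x * cis (2 * pi * of_int t)"
    unfolding unity_root_def t cis_conv_exp exp_add[symmetric] using False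
    by (intro arg_cong[where f = exp]) (simp add: field_simps)
  then show ?thesis by simp
qed

lemma Kka_of_int_eq_sum:
  "Kka k a (of_int n) (of_int m) =
     (\<Sum>h::nat | h < a * k \<and> coprime h (a * k).
        unity_root (a * k) (m * negInv (kstar k) (int h) - n * int h))"
  unfolding Kka_def unity_root_def
  by (intro sum.cong refl arg_cong[where f = exp]) (simp add: field_simps)

lemma Kka_half_eq_sum:
  "Kka k 1 (of_int n / 2) (of_int m / 2) =
     (\<Sum>h::nat | h < k \<and> coprime h k. unity_root (2 * k) (m * negInv (kstar k) (int h) - n * int h))"
  unfolding Kka_def unity_root_def
  by (intro sum.cong refl arg_cong[where f = exp]) (auto simp: field_simps)

lemma HK_eq_sum:
  "HK K n m = (\<Sum>h::nat | h < K \<and> coprime h K. unity_root K (m * negInv (int K) (int h) - n * int h))"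
  unfolding HK_def unity_root_def
  by (intro sum.cong refl arg_cong[where f = exp]) (simp add: field_simps)

lemma neg_inverse_unique:
  fixes h x y N :: int
  assumes "coprime h N" "[h * x = -1] (mod N)" "[h * y = -1] (mod N)"
  shows "[x = y] (mod N)"
proof -
  have "[h * x = h * y] (mod N)" using assms(2,3) cong_sym cong_trans by blast
  then show ?thesis using assms(1) by (simp add: cong_mult_lcancel)
qed

lemma mult_negInv_cong:
  assumes "coprime h M"
  shows "[h * negInv M h = -1] (mod M)"
proof -
  obtain x where "[h * x = 1] (mod M)" using cong_solve_coprime_int[OF assms] by blast
  then have "[h * (-x) = -1] (mod M)" using cong_minus_minus_iff by fastforce
  then show ?thesis unfolding negInv_def by (rule someI)
qed

lemma negInv_cong_divisor:
  assumes "coprime h M" "N dvd M"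
  shows "[negInv M h = negInv N h] (mod N)"
proof (rule neg_inverse_unique)
  show "coprime h N" using coprime_divisors[OF dvd_refl assms(2,1)] .
  show "[h * negInv M h = -1] (mod N)" using cong_dvd_modulus[OF mult_negInv_cong[OF assms(1)] assms(2)] .
  show "[h * negInv N h = -1] (mod N)" using mult_negInv_cong[OF \<open>coprime h N\<close>] .
qed

lemma neg_inverse_shift:
  fixes h h' K :: int
  assumes "even K" "[h * h' = -1] (mod 2 * K)"
  shows "[(h + K) * (h' + K) = -1] (mod 2 * K)"
proof -
  have "[h * h' = -1] (mod 2)" using cong_dvd_modulus[OF assms(2)] by simp
  then have "odd h" "odd h'" by (auto simp: cong_iff_dvd_diff)
  with assms(1) obtain t where t: "h + h' + K = 2 * t" by (metis evenE odd_add)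
  have "(h + K) * (h' + K) = h * h' + K * (h + h' + K)"
    by (simp add: algebra_simps)
  also have "\<dots> = h * h' + 2 * K * t"
    by (simp add: t)
  finally have "[(h + K) * (h' + K) = h * h'] (mod 2 * K)"
    by (simp add: cong_iff_dvd_diff)
  from this assms(2) show ?thesis by (rule cong_trans)
qed

lemma negInv_shift:
  fixes K M h :: int
  assumes "even K" "2 * K dvd M" "coprime h M" "coprime (h + K) M"
  shows "[negInv M (h + K) = negInv M h + K] (mod 2 * K)"
proof (rule neg_inverse_unique)
  show "coprime (h + K) (2 * K)" using coprime_divisors[OF dvd_refl assms(2,4)] .
  show "[(h + K) * negInv M (h + K) = -1] (mod 2 * K)"
    using cong_dvd_modulus[OF mult_negInv_cong[OF assms(4)] assms(2)] .
  show "[(h + K) * (negInv M h + K) = -1] (mod 2 * K)"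
    using neg_inverse_shift[OF assms(1) cong_dvd_modulus[OF mult_negInv_cong[OF assms(3)] assms(2)]] .
qed

lemma kstar_eq_square_mult:
  assumes "even k"
  obtains d :: int where "even d" "d dvd int k" "kstar k = d\<^sup>2 * int k"
proof (cases "gcd k 6 = 2")
  case True
  then show ?thesis using that[of 2] assms by (simp add: kstar_def)
next
  case False
  have "3 dvd k"
  proof (rule ccontr)
    assume "\<not> 3 dvd k"
    then have "k mod 6 = 2 \<or> k mod 6 = 4" using assms by presburger
    moreover have "gcd k 6 = gcd 6 (k mod 6)" by (metis gcd_red_nat)
    ultimately show False using False by (auto simp: gcd_non_0_nat)
  qed
  then have "6 dvd int k" using assms by presburger
  then show ?thesis using that[of 6] False by (simp add: kstar_def)
qed

lemma coprime_square_mult: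
  fixes h k d :: "'a :: semiring_gcd"
  assumes "coprime h k" "d dvd k"
  shows "coprime h (d\<^sup>2 * k)"
  using assms(1) coprime_divisors[OF dvd_refl assms(2,1)] by (simp add: coprime_mult_right_iff)

lemma coprime_kstar:
  assumes "even k" "coprime h (int k)"
  shows "coprime h (kstar k)"
proof -
  obtain d :: int where "d dvd int k" "kstar k = d\<^sup>2 * int k"
    using kstar_eq_square_mult[OF assms(1)] .
  then show ?thesis using coprime_square_mult[OF assms(2)] by simp
qed

lemma double_dvd_kstar:
  assumes "even k"
  shows "2 * int k dvd kstar k"
proof -
  obtain d :: int where "even d" "kstar k = d\<^sup>2 * int k"
    using kstar_eq_square_mult[OF assms] by blast
  then show ?thesis by (auto simp: power2_eq_square)
qed

lemma Kka_eq_HK: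
  assumes "even k" "a dvd 2"
  shows "Kka k a (of_int n) (of_int m) = HK (a * k) n m"
  unfolding Kka_of_int_eq_sum HK_eq_sum
proof (intro sum.cong refl unity_root_cong)
  fix h assume "h \<in> {h. h < a * k \<and> coprime h (a * k)}"
  then have "coprime (int h) (kstar k)" using coprime_kstar assms(1) by auto
  moreover have "int (a * k) dvd kstar k"
  proof -
    have "a * k dvd 2 * k" using assms(2) by (simp add: mult_dvd_mono)
    then have "int (a * k) dvd int (2 * k)" by (simp only: int_dvd_int_iff)
    also have "int (2 * k) = 2 * int k" by simp
    also have "\<dots> dvd kstar k" by (rule double_dvd_kstar[OF assms(1)])
    finally show ?thesis .
  qed
  ultimately have "[negInv (kstar k) h = negInv (int (a * k)) h] (mod int (a * k))"
    by (rule negInv_cong_divisor)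
  then show "[m * negInv (kstar k) h - n * h = m * negInv (int (a * k)) h - n * h] (mod int (a * k))"
    by (intro cong_diff cong_scalar_left cong_refl)
qed

lemma coprime_add_self_left_iff: "coprime (h + k) k \<longleftrightarrow> coprime h (k :: nat)"
  by (simp only: coprime_iff_gcd_eq_1 gcd_add1)

lemma coprime_double_iff:
  assumes "even k"
  shows "coprime h (2 * k) \<longleftrightarrow> coprime h (k :: nat)"
proof -
  have "coprime h 2" if "coprime h k" using coprime_divisors[OF dvd_refl assms that] .
  then show ?thesis by auto
qed

lemma sum_coprime_double:
  fixes f :: "nat \<Rightarrow> 'a :: comm_monoid_add"
  assumes "even k"
  shows "(\<Sum>h | h < 2 * k \<and> coprime h (2 * k). f h) = (\<Sum>h | h < k \<and> coprime h k. f h + f (h + k))"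
proof -
  let ?g = "\<lambda>h. if coprime h k then f h else 0"
  have "(\<Sum>h | h < 2 * k \<and> coprime h (2 * k). f h) = (\<Sum>h\<in>{0..<k + k}. ?g h)"
    using coprime_double_iff[OF assms] by (simp add: sum.inter_filter[symmetric] atLeast0LessThan mult_2)
  also have "\<dots> = (\<Sum>h\<in>{0..<k}. ?g h) + (\<Sum>h\<in>{0 + k..<k + k}. ?g h)"
    by (simp add: sum.atLeastLessThan_concat)
  also have "(\<Sum>h\<in>{0 + k..<k + k}. ?g h) = (\<Sum>h\<in>{0..<k}. ?g (h + k))"
    by (rule sum.shift_bounds_nat_ivl)
  also have "(\<Sum>h\<in>{0..<k}. ?g h) + \<dots> = (\<Sum>h\<in>{0..<k}. if coprime h k then f h + f (h + k) else 0)"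
    unfolding sum.distrib[symmetric] by (intro sum.cong refl) (simp add: coprime_add_self_left_iff)
  also have "\<dots> = (\<Sum>h | h < k \<and> coprime h k. f h + f (h + k))"
    by (simp add: sum.inter_filter[symmetric] atLeast0LessThan)
  finally show ?thesis .
qed

lemma Kka_half_term_shift:
  assumes "even k" "odd n" "odd m" "coprime h k"
  shows "unity_root (2 * k) (m * negInv (kstar k) (int (h + k)) - n * int (h + k))
       = unity_root (2 * k) (m * negInv (kstar k) (int h) - n * int h)"
proof (rule unity_root_cong)
  let ?h' = "negInv (kstar k) (int h)"
  have "coprime (int h) (kstar k)" "coprime (int h + int k) (kstar k)"
    using assms(1,4) coprime_kstar coprime_add_self_left_iff[of h k] by (simp_all flip: of_nat_add)
  then have "[negInv (kstar k) (int h + int k) = ?h' + int k] (mod 2 * int k)"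
    using negInv_shift assms(1) double_dvd_kstar by simp
  then have "[m * negInv (kstar k) (int h + int k) - n * (int h + int k)
             = m * (?h' + int k) - n * (int h + int k)] (mod 2 * int k)"
    by (intro cong_diff cong_scalar_left cong_refl)
  moreover obtain s where "m - n = 2 * s" using assms(2,3) by (metis evenE odd_add even_diff)
  then have "m * (?h' + int k) - n * (int h + int k) = m * ?h' - n * int h + 2 * int k * s"
    by (simp add: algebra_simps flip: \<open>m - n = 2 * s\<close>)
  then have "[m * (?h' + int k) - n * (int h + int k) = m * ?h' - n * int h] (mod 2 * int k)"
    by (simp add: cong_iff_dvd_diff)
  ultimately show "[m * negInv (kstar k) (int (h + k)) - n * int (h + k) = m * ?h' - n * int h] (mod int (2 * k))"
    by (simp add: cong_trans)
qed

theorem theorem2p5: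
  fixes k :: nat and n m :: int
  assumes "even k" and "odd n" and "odd m"
  shows "2 * Kka k 1 (of_int n / 2) (of_int m / 2) = Kka k 2 (of_int n) (of_int m)
       \<and> Kka k 2 (of_int n) (of_int m) = HK (2 * k) n m
       \<and> Kka k 1 (of_int n) (of_int m) = HK k n m"
proof (intro conjI)
  let ?u = "\<lambda>h. unity_root (2 * k) (m * negInv (kstar k) (int h) - n * int h)"
  have "Kka k 2 (of_int n) (of_int m) = (\<Sum>h | h < k \<and> coprime h k. ?u h + ?u (h + k))"
    unfolding Kka_of_int_eq_sum by (rule sum_coprime_double[OF assms(1)])
  also have "\<dots> = (\<Sum>h | h < k \<and> coprime h k. 2 * ?u h)"
    using Kka_half_term_shift[OF assms] by (intro sum.cong refl) simp
  also have "\<dots> = 2 * Kka k 1 (of_int n / 2) (of_int m / 2)"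
    unfolding Kka_half_eq_sum by (simp add: sum_distrib_left)
  finally show "2 * Kka k 1 (of_int n / 2) (of_int m / 2) = Kka k 2 (of_int n) (of_int m)" ..
  show "Kka k 2 (of_int n) (of_int m) = HK (2 * k) n m" using Kka_eq_HK[OF assms(1)] by simp
  show "Kka k 1 (of_int n) (of_int m) = HK k n m" using Kka_eq_HK[OF assms(1), of 1] by simp
qed

end
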